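(* Let $U$ be a reduced $\mathbb{Z}_pG$-lattice, identified with $\ker f\subseteq F=\bigoplus_{i\in I}F_{(i)}$ as below. Then $$I_NU\subseteq U\cap\Big(\bigoplus_{H\neq N,\ |H|=p}F_{(H)}\Big),$$ with equality if and only if $U_N$ is a $\mathbb{Z}_p$-lattice (i.e. $\mathbb{Z}_p$-torsion free).
   Context: Let $p$ be a prime and $G=C_p\times C_p=N\times C$, where $N=\langle n\rangle$ and $C=\langle c\rangle$ are cyclic of order $p$. A $\mathbb{Z}_pG$-lattice is a $\mathbb{Z}_pG$-module free of finite rank over $\mathbb{Z}_p$. For $H\le G$ write $\widehat H=\sum_{h\in H}h$ and $I_H$ for the augmentation ideal of $\mathbb{Z}_pH$ (generated by the $1-h$, $h\in H$). For a module $U$, $U_N=U/I_NU$. Let $I=\{0\}\cup\{H\le G:|H|=p\}$. Put $e_0=\frac1{p^2}\widehat G$ and $e_H=\frac1{p^2}(p\widehat H-\widehat G)$ for $|H|=p$ (the primitive idempotents of $\mathbb{Q}_pG$). For $i\in I$, $\Lambda_{(i)}=e_i\mathbb{Z}_pG$, regarded both as a ring (quotient of $\mathbb{Z}_pG$ via $x\mapsto e_ix$) and as a module. A lattice is reduced if it has no direct summand isomorphic to $\mathbb{Z}_pG$ or to any $\Lambda_{(i)}$. A diagram is a tuple $(V;V_{(i)},\,i\in I)$ where $V$ is a finitely generated $\mathbb{F}_pG$-module, each $V_{(i)}$ is a submodule, $\sum_{i\neq j}V_{(i)}=V$ for every $j\in I$, and the action of $\mathbb{Z}_pG$ on each $V_{(i)}$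 factors through $\mathbb{Z}_pG\to\Lambda_{(i)}$. The diagram of a reduced lattice $U$: with $U\subseteq\mathbb{Q}_p\otimes U$, $U_{(i)}=e_iU$, $U_*=\bigoplus_iU_{(i)}$, set $V=U_*/U$, $V_{(i)}=(U_{(i)}+U)/U$. Conversely, from a diagram one forms $F_{(i)}$ = direct sum of $\dim_{\mathbb{F}_p}(V_{(i)}/\mathrm{Rad}\,V_{(i)})$ copies of $\Lambda_{(i)}$, $F=\bigoplus_{i\in I}F_{(i)}$, surjective $\Lambda_{(i)}$-homomorphisms $f_i:F_{(i)}\to V_{(i)}$ inducing isomorphisms $F_{(i)}/\mathrm{Rad}\,F_{(i)}\to V_{(i)}/\mathrm{Rad}\,V_{(i)}$, and $f=\sum_i f_i:F\to V$; the reduced lattice of the diagram is $\ker f$. These constructions are mutually inverse up to isomorphism. Hence for a reduced lattice $U$ with diagram $V_*$ we fix such $F,f$ and identify $U=\ker f\subseteq F$; for $x\in F$, $\overline{x}=f(x)\in V$, and elements of $F$ are written $x=\sum_i x_i$ with $x_i\in F_{(i)}$. *)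

theory Defs
  imports Main "HOL-Computational_Algebra.Primes"
begin

section \<open>p-adic integers Z_p (as compatible residue sequences)\<close>

type_synonym zp = "nat \<Rightarrow> int"

definition Zp :: "nat \<Rightarrow> zp set" where
  "Zp p = {x. \<forall>k. 0 \<le> x k \<and> x k < int p ^ k \<and> x (Suc k) mod (int p ^ k) = x k}"

definition zp_of_int :: "nat \<Rightarrow> int \<Rightarrow> zp" where
  "zp_of_int p z = (\<lambda>k. z mod (int p ^ k))"

definition zp_zero :: zp where "zp_zero = (\<lambda>k. 0)"

definition zp_one :: "nat \<Rightarrow> zp" where "zp_one p = zp_of_int p 1"

definition zp_add :: "nat \<Rightarrow> zp \<Rightarrow> zp \<Rightarrow> zp" where
  "zp_add p x y = (\<lambda>k. (x k + y k) mod (int p ^ k))"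

definition zp_mul :: "nat \<Rightarrow> zp \<Rightarrow> zp \<Rightarrow> zp" where
  "zp_mul p x y = (\<lambda>k. (x k * y k) mod (int p ^ k))"

definition zp_sum :: "nat \<Rightarrow> ('a \<Rightarrow> zp) \<Rightarrow> 'a set \<Rightarrow> zp" where
  "zp_sum p f A = (\<lambda>k. (\<Sum>a\<in>A. f a k) mod (int p ^ k))"

section \<open>The group G = C_p x C_p = N x C\<close>

text \<open>(a,b) with a,b < p stands for n^a c^b.\<close>
type_synonym grp = "nat \<times> nat"

definition Gp :: "nat \<Rightarrow> grp set" where "Gp p = {..<p} \<times> {..<p}"

definition gmul :: "nat \<Rightarrow> grp \<Rightarrow> grp \<Rightarrow> grp" where
  "gmul p g h = ((fst g + fst h) mod p, (snd g + snd h) mod p)"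

definition gdiv :: "nat \<Rightarrow> grp \<Rightarrow> grp \<Rightarrow> grp" where
  "gdiv p g h = ((fst g + p - fst h) mod p, (snd g + p - snd h) mod p)"

definition Nsub :: "nat \<Rightarrow> grp set" where "Nsub p = {..<p} \<times> {0}"

text \<open>Subgroups of G of order p (a finite nonempty subset closed under the product is a subgroup).\<close>
definition subgroups_p :: "nat \<Rightarrow> grp set set" where
  "subgroups_p p = {H. H \<subseteq> Gp p \<and> (0,0) \<in> H \<and> (\<forall>x\<in>H. \<forall>y\<in>H. gmul p x y \<in> H) \<and> card H = p}"

text \<open>Index set I = {0} u {H : |H| = p}; None encodes the index 0, Some H the subgroup H.\<close>
type_synonym ix = "grp set option"

definition Ip :: "nat \<Rightarrow> ix set" where "Ip p = insert None (Some ` subgroups_p p)"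

type_synonym zpg = "grp \<Rightarrow> zp"

definition ZpG :: "nat \<Rightarrow> zpg set" where
  "ZpG p = {r. \<forall>g. (g \<in> Gp p \<longrightarrow> r g \<in> Zp p) \<and> (g \<notin> Gp p \<longrightarrow> r g = zp_zero)}"

definition zpg_zero :: zpg where "zpg_zero = (\<lambda>g. zp_zero)"

definition zpg_add :: "nat \<Rightarrow> zpg \<Rightarrow> zpg \<Rightarrow> zpg" where
  "zpg_add p r s = (\<lambda>g. if g \<in> Gp p then zp_add p (r g) (s g) else zp_zero)"

definition zpg_mul :: "nat \<Rightarrow> zpg \<Rightarrow> zpg \<Rightarrow> zpg" where
  "zpg_mul p r s = (\<lambda>g. if g \<in> Gp p
      then zp_sum p (\<lambda>h. zp_mul p (r h) (s (gdiv p g h))) (Gp p) else zp_zero)"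

definition zpg_const :: "zp \<Rightarrow> zpg" where
  "zpg_const a = (\<lambda>g. if g = (0,0) then a else zp_zero)"

definition IN :: "nat \<Rightarrow> zpg set" where
  "IN p = {r \<in> ZpG p. (\<forall>g. g \<notin> Nsub p \<longrightarrow> r g = zp_zero) \<and> zp_sum p r (Nsub p) = zp_zero}"

text \<open>w_i = p^2 e_i in Z_p G: w_0 = hat G, w_H = p hat H - hat G.\<close>
definition w :: "nat \<Rightarrow> ix \<Rightarrow> zpg" where
  "w p i = (\<lambda>g. if g \<notin> Gp p then zp_zero else
      (case i of None \<Rightarrow> zp_one p
        | Some H \<Rightarrow> (if g \<in> H then zp_of_int p (int p - 1) else zp_of_int p (-1))))"

text \<open>Lambda_(i) = e_i Z_p G, realised (isomorphically, via multiplication by p^2) as w_i Z_p G.\<close>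
definition Lam :: "nat \<Rightarrow> ix \<Rightarrow> zpg set" where
  "Lam p i = {zpg_mul p (w p i) r | r. r \<in> ZpG p}"

type_synonym fcomp = "nat \<Rightarrow> zpg"
type_synonym felt = "ix \<Rightarrow> fcomp"

definition Fcomp :: "nat \<Rightarrow> nat \<Rightarrow> ix \<Rightarrow> fcomp set" where
  "Fcomp p d i = {y. \<forall>k. (k < d \<longrightarrow> y k \<in> Lam p i) \<and> (d \<le> k \<longrightarrow> y k = zpg_zero)}"

definition fc_zero :: fcomp where "fc_zero = (\<lambda>k. zpg_zero)"

definition fc_add :: "nat \<Rightarrow> fcomp \<Rightarrow> fcomp \<Rightarrow> fcomp" where
  "fc_add p y z = (\<lambda>k. zpg_add p (y k) (z k))"

definition fc_smul :: "nat \<Rightarrow> zpg \<Rightarrow> fcomp \<Rightarrow> fcomp" where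
  "fc_smul p r y = (\<lambda>k. zpg_mul p r (y k))"

definition Fset :: "nat \<Rightarrow> (ix \<Rightarrow> nat) \<Rightarrow> felt set" where
  "Fset p d = {x. \<forall>i. (i \<in> Ip p \<longrightarrow> x i \<in> Fcomp p (d i) i) \<and> (i \<notin> Ip p \<longrightarrow> x i = fc_zero)}"

definition f_zero :: felt where "f_zero = (\<lambda>i. fc_zero)"

definition f_add :: "nat \<Rightarrow> felt \<Rightarrow> felt \<Rightarrow> felt" where
  "f_add p x y = (\<lambda>i. fc_add p (x i) (y i))"

definition f_smul :: "nat \<Rightarrow> zpg \<Rightarrow> felt \<Rightarrow> felt" where
  "f_smul p r x = (\<lambda>i. fc_smul p r (x i))"

definition nsm :: "nat \<Rightarrow> 'v::ab_group_add \<Rightarrow> 'v" where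
  "nsm m v = (\<Sum>j<m. v)"

definition gact :: "('v \<Rightarrow> 'v) \<Rightarrow> ('v \<Rightarrow> 'v) \<Rightarrow> grp \<Rightarrow> 'v \<Rightarrow> 'v" where
  "gact vn vc g v = (vn ^^ fst g) ((vc ^^ snd g) v)"

text \<open>Action of Z_p G on an F_p G-module (through Z_p G -> F_p G; r g 1 is the residue mod p).\<close>
definition vact :: "nat \<Rightarrow> ('v::ab_group_add \<Rightarrow> 'v) \<Rightarrow> ('v \<Rightarrow> 'v) \<Rightarrow> zpg \<Rightarrow> 'v \<Rightarrow> 'v" where
  "vact p vn vc r v = (\<Sum>g\<in>Gp p. nsm (nat (r g 1)) (gact vn vc g v))"

text \<open>V is a finitely generated (= finite) F_p G-module: a finite elementary abelian p-group with
  commuting additive actions of n and c of order dividing p.\<close>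
definition FpG_module :: "nat \<Rightarrow> 'v::ab_group_add set \<Rightarrow> ('v \<Rightarrow> 'v) \<Rightarrow> ('v \<Rightarrow> 'v) \<Rightarrow> bool" where
  "FpG_module p V vn vc \<longleftrightarrow> finite V \<and> 0 \<in> V \<and> (\<forall>x\<in>V. \<forall>y\<in>V. x + y \<in> V) \<and> (\<forall>x\<in>V. - x \<in> V)
     \<and> (\<forall>x\<in>V. nsm p x = 0)
     \<and> (\<forall>x\<in>V. vn x \<in> V \<and> vc x \<in> V)
     \<and> (\<forall>x\<in>V. \<forall>y\<in>V. vn (x + y) = vn x + vn y \<and> vc (x + y) = vc x + vc y)
     \<and> (\<forall>x\<in>V. (vn ^^ p) x = x \<and> (vc ^^ p) x = x \<and> vn (vc x) = vc (vn x))"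

definition vsub :: "('v::ab_group_add \<Rightarrow> 'v) \<Rightarrow> ('v \<Rightarrow> 'v) \<Rightarrow> 'v set \<Rightarrow> bool" where
  "vsub vn vc S \<longleftrightarrow> 0 \<in> S \<and> (\<forall>x\<in>S. \<forall>y\<in>S. x + y \<in> S) \<and> (\<forall>x\<in>S. vn x \<in> S \<and> vc x \<in> S)"

definition fsub :: "nat \<Rightarrow> fcomp set \<Rightarrow> bool" where
  "fsub p S \<longleftrightarrow> fc_zero \<in> S \<and> (\<forall>x\<in>S. \<forall>y\<in>S. fc_add p x y \<in> S)
     \<and> (\<forall>r\<in>ZpG p. \<forall>x\<in>S. fc_smul p r x \<in> S)"

definition max_sub :: "('a set \<Rightarrow> bool) \<Rightarrow> 'a set \<Rightarrow> 'a set \<Rightarrow> bool" where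
  "max_sub P M S \<longleftrightarrow> P S \<and> S \<subset> M \<and> (\<forall>T. P T \<and> S \<subseteq> T \<and> T \<subseteq> M \<longrightarrow> T = S \<or> T = M)"

definition Rad :: "('a set \<Rightarrow> bool) \<Rightarrow> 'a set \<Rightarrow> 'a set" where
  "Rad P M = M \<inter> \<Inter>{S. max_sub P M S}"

definition sum_subs :: "'i set \<Rightarrow> ('i \<Rightarrow> 'v::ab_group_add set) \<Rightarrow> 'v set" where
  "sum_subs J W = {\<Sum>i\<in>J. v i | v. \<forall>i\<in>J. v i \<in> W i}"

definition diagram :: "nat \<Rightarrow> 'v::ab_group_add set \<Rightarrow> ('v \<Rightarrow> 'v) \<Rightarrow> ('v \<Rightarrow> 'v) \<Rightarrow> (ix \<Rightarrow> 'v set) \<Rightarrow> bool" where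
  "diagram p V vn vc Vi \<longleftrightarrow> FpG_module p V vn vc
     \<and> (\<forall>i\<in>Ip p. Vi i \<subseteq> V \<and> vsub vn vc (Vi i))
     \<and> (\<forall>j\<in>Ip p. sum_subs (Ip p - {j}) Vi = V)
     \<and> (\<forall>i\<in>Ip p. \<forall>r\<in>ZpG p. zpg_mul p (w p i) r = zpg_zero \<longrightarrow> (\<forall>v\<in>Vi i. vact p vn vc r v = 0))"

text \<open>f_i : F_(i) -> V_(i) surjective Lambda_(i)-homomorphism inducing an isomorphism
  F_(i)/Rad F_(i) -> V_(i)/Rad V_(i).\<close>
definition good_cover :: "nat \<Rightarrow> nat \<Rightarrow> ix \<Rightarrow> ('v::ab_group_add \<Rightarrow> 'v) \<Rightarrow> ('v \<Rightarrow> 'v) \<Rightarrow> 'v set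
      \<Rightarrow> (fcomp \<Rightarrow> 'v) \<Rightarrow> bool" where
  "good_cover p d i vn vc W fi \<longleftrightarrow>
     fi ` Fcomp p d i = W
     \<and> (\<forall>x\<in>Fcomp p d i. \<forall>y\<in>Fcomp p d i. fi (fc_add p x y) = fi x + fi y)
     \<and> (\<forall>r\<in>ZpG p. \<forall>x\<in>Fcomp p d i. fi (fc_smul p r x) = vact p vn vc r (fi x))
     \<and> fi ` Rad (fsub p) (Fcomp p d i) \<subseteq> Rad (vsub vn vc) W
     \<and> (\<forall>x\<in>Fcomp p d i. fi x \<in> Rad (vsub vn vc) W \<longrightarrow> x \<in> Rad (fsub p) (Fcomp p d i))"

definition ftot :: "nat \<Rightarrow> (ix \<Rightarrow> fcomp \<Rightarrow> 'v::ab_group_add) \<Rightarrow> felt \<Rightarrow> 'v" where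
  "ftot p f x = (\<Sum>i\<in>Ip p. f i (x i))"

definition Uker :: "nat \<Rightarrow> (ix \<Rightarrow> nat) \<Rightarrow> (ix \<Rightarrow> fcomp \<Rightarrow> 'v::ab_group_add) \<Rightarrow> felt set" where
  "Uker p d f = {x \<in> Fset p d. ftot p f x = 0}"

inductive_set aug_prod :: "nat \<Rightarrow> zpg set \<Rightarrow> felt set \<Rightarrow> felt set" for p A U where
  zero: "f_zero \<in> aug_prod p A U"
| prod: "a \<in> A \<Longrightarrow> u \<in> U \<Longrightarrow> f_smul p a u \<in> aug_prod p A U"
| add: "x \<in> aug_prod p A U \<Longrightarrow> y \<in> aug_prod p A U \<Longrightarrow> f_add p x y \<in> aug_prod p A U"

text \<open>U_N = U / I_N U is Z_p-torsion free.\<close>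
definition UN_torsion_free :: "nat \<Rightarrow> felt set \<Rightarrow> bool" where
  "UN_torsion_free p U \<longleftrightarrow> (\<forall>a\<in>Zp p. a \<noteq> zp_zero \<longrightarrow>
      (\<forall>x\<in>U. f_smul p (zpg_const a) x \<in> aug_prod p (IN p) U \<longrightarrow> x \<in> aug_prod p (IN p) U))"

end

theory Submission
  imports Defs "HOL-Number_Theory.Cong"
begin

text \<open>
  Both \<open>w\<^sub>0 = \<Sigma>G\<close> and \<open>w\<^sub>N = p\<Sigma>N - \<Sigma>G\<close> are \<open>N\<close>-invariant, so the augmentation ideal
  \<open>I\<^sub>N\<close> annihilates \<open>\<Lambda>\<^sub>(\<^sub>0\<^sub>)\<close> and \<open>\<Lambda>\<^sub>(\<^sub>N\<^sub>)\<close>; this gives the inclusion.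
  For a subgroup \<open>H \<noteq> N\<close> of order \<open>p\<close> every coset of \<open>N\<close> meets \<open>H\<close> exactly once, hence
  \<open>\<Sigma>N\<close> kills \<open>w\<^sub>H\<close> and the element \<open>p - \<Sigma>N\<close> of \<open>I\<^sub>N\<close> acts on \<open>\<Lambda>\<^sub>(\<^sub>H\<^sub>)\<close> as multiplication by
  \<open>p\<close>. So every \<open>x\<close> in the right hand side satisfies \<open>p x \<in> I\<^sub>N U\<close>, and torsion freeness
  of \<open>U\<^sub>N\<close> gives equality. Conversely, if equality holds and \<open>a x \<in> I\<^sub>N U\<close> with
  \<open>0 \<noteq> a \<in> \<int>\<^sub>p\<close>, then the \<open>0\<close>- and \<open>N\<close>-components of \<open>a x\<close> vanish; as \<open>\<int>\<^sub>pG\<close> is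
  \<open>\<int>\<^sub>p\<close>-torsion free, so do those of \<open>x\<close>, whence \<open>x \<in> I\<^sub>N U\<close>.
  The argument works for every \<open>\<int>\<^sub>pG\<close>-submodule \<open>U\<close> of \<open>F\<close>; the diagram only serves to
  make \<open>ker f\<close> one.
\<close>

lemma of_nat_add_diff_mod:
  assumes "b \<le> a + (p::nat)"
  shows "int ((a + p - b) mod p) = (int a - int b) mod int p"
proof -
  have "int (a + p - b) = int a - int b + int p"
    using assms by simp
  then show ?thesis
    by (metis mod_add_self2 of_nat_mod)
qed

lemma add_diff_mod_diff_cancel:
  assumes "0 < (p::nat)" "a < p" "b < p"
  shows "(a + p - (a + p - b) mod p) mod p = b"
proof -
  have "(a + p - b) mod p \<le> a + p"
    using le_trans[OF mod_less_eq_dividend] by simp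
  then have "int ((a + p - (a + p - b) mod p) mod p) = int b"
    using assms by (simp add: of_nat_add_diff_mod mod_diff_right_eq)
  then show ?thesis
    by simp
qed

lemma add_mod_diff_cancel:
  assumes "0 < (p::nat)" "a < p" "b < p"
  shows "((a + b) mod p + p - a) mod p = b"
proof -
  have "int (((a + b) mod p + p - a) mod p) = (int ((a + b) mod p) - int a) mod int p"
    using assms by (intro of_nat_add_diff_mod) simp
  also have "\<dots> = int b"
    using assms by (simp add: of_nat_mod mod_diff_left_eq)
  finally show ?thesis
    by simp
qed

lemma add_diff_mod_cancel:
  assumes "0 < (p::nat)" "a < p" "c < p"
  shows "(a + (c + p - a) mod p) mod p = c"
proof -
  have "int ((a + (c + p - a) mod p) mod p) = int c"
    using assms by (simp add: of_nat_add_diff_mod of_nat_mod mod_add_right_eq)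
  then show ?thesis
    by simp
qed

lemma diff_add_mod_eq_diff_diff_mod:
  assumes "0 < (p::nat)" "a < p" "b < p"
  shows "(c + p - (a + b) mod p) mod p = ((c + p - a) mod p + p - b) mod p"
proof -
  have ca: "int ((c + p - a) mod p) = (int c - int a) mod int p"
    using assms by (intro of_nat_add_diff_mod) simp
  have "int ((c + p - (a + b) mod p) mod p) = (int c - int ((a + b) mod p)) mod int p"
    using assms by (intro of_nat_add_diff_mod) (simp add: less_imp_le less_le_trans[OF mod_less_divisor])
  also have "\<dots> = ((int c - int a) mod int p - int b) mod int p"
    by (simp add: of_nat_mod mod_diff_right_eq mod_diff_left_eq diff_diff_eq)
  also have "\<dots> = int (((c + p - a) mod p + p - b) mod p)"
    unfolding ca[symmetric] using assms by (intro of_nat_add_diff_mod[symmetric]) simp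
  finally show ?thesis
    by simp
qed

lemma mod_add_pred_mult_eq_0_imp_eq:
  assumes "0 < (p::nat)" "x < p" "y < p" and "(x + ((p - 1) * y) mod p) mod p = 0"
  shows "x = y"
proof -
  have "(x + (p - 1) * y) mod p = 0"
    using assms(4) by (simp add: mod_add_right_eq)
  then have "(x + (p - 1) * y + y) mod p = y mod p"
    by (metis add.left_neutral mod_add_left_eq)
  moreover have "x + (p - 1) * y + y = x + p * y"
    using assms(1) by (cases p) auto
  ultimately have "(x + p * y) mod p = y mod p"
    by metis
  then have "x mod p = y mod p"
    by simp
  then show ?thesis
    using assms by simp
qed

lemma Gp_mem: "g \<in> Gp p \<longleftrightarrow> fst g < p \<and> snd g < p"
  by (cases g) (auto simp: Gp_def)

lemma finite_Gp: "finite (Gp p)"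
  by (simp add: Gp_def)

lemma zero_in_Gp: "0 < p \<Longrightarrow> (0, 0) \<in> Gp p"
  by (simp add: Gp_mem)

lemma gdiv_in_Gp: "0 < p \<Longrightarrow> gdiv p g h \<in> Gp p"
  by (simp add: Gp_mem gdiv_def)

lemma gmul_in_Gp: "0 < p \<Longrightarrow> gmul p g h \<in> Gp p"
  by (simp add: Gp_mem gmul_def)

lemma gdiv_gdiv: "0 < p \<Longrightarrow> g \<in> Gp p \<Longrightarrow> h \<in> Gp p \<Longrightarrow> gdiv p g (gdiv p g h) = h"
  by (cases g, cases h) (simp add: Gp_mem gdiv_def add_diff_mod_diff_cancel)

lemma gdiv_gmul: "0 < p \<Longrightarrow> h \<in> Gp p \<Longrightarrow> u \<in> Gp p \<Longrightarrow> gdiv p (gmul p h u) h = u"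
  by (cases u, cases h) (simp add: Gp_mem gdiv_def gmul_def add_mod_diff_cancel)

lemma gmul_gdiv: "0 < p \<Longrightarrow> h \<in> Gp p \<Longrightarrow> g \<in> Gp p \<Longrightarrow> gmul p h (gdiv p g h) = g"
  by (cases g, cases h) (simp add: Gp_mem gdiv_def gmul_def add_diff_mod_cancel)

lemma gdiv_gmul_right:
  "0 < p \<Longrightarrow> h \<in> Gp p \<Longrightarrow> u \<in> Gp p \<Longrightarrow> gdiv p g (gmul p h u) = gdiv p (gdiv p g h) u"
  by (cases u, cases h) (simp add: Gp_mem gdiv_def gmul_def diff_add_mod_eq_diff_diff_mod)

lemma gdiv_zero: "g \<in> Gp p \<Longrightarrow> gdiv p g (0, 0) = g"
  by (cases g) (simp add: Gp_mem gdiv_def)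

lemma Nsub_mem: "g \<in> Nsub p \<longleftrightarrow> fst g < p \<and> snd g = 0"
  by (cases g) (auto simp: Nsub_def)

lemma Nsub_subset_Gp: "Nsub p \<subseteq> Gp p"
  by (auto simp: Nsub_mem Gp_mem)

lemma finite_Nsub: "finite (Nsub p)"
  by (simp add: Nsub_def)

lemma card_Nsub: "card (Nsub p) = p"
  by (simp add: Nsub_def card_cartesian_product)

lemma zero_in_Nsub: "0 < p \<Longrightarrow> (0, 0) \<in> Nsub p"
  by (simp add: Nsub_mem)

lemma gdiv_in_Nsub_iff:
  "h \<in> Gp p \<Longrightarrow> h' \<in> Nsub p \<Longrightarrow> gdiv p h h' \<in> Nsub p \<longleftrightarrow> h \<in> Nsub p"
  by (cases h, cases h') (auto simp: Nsub_mem Gp_mem gdiv_def)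

lemma Nsub_in_subgroups_p: "0 < p \<Longrightarrow> Nsub p \<in> subgroups_p p"
  using Nsub_subset_Gp card_Nsub zero_in_Nsub by (auto simp: subgroups_p_def Nsub_mem gmul_def)

lemma finite_Ip: "finite (Ip p)"
proof -
  have "subgroups_p p \<subseteq> Pow (Gp p)"
    by (auto simp: subgroups_p_def)
  then show ?thesis
    using finite_Gp by (simp add: Ip_def finite_subset)
qed

lemma None_in_Ip: "None \<in> Ip p"
  by (simp add: Ip_def)

lemma Nsub_in_Ip: "0 < p \<Longrightarrow> Some (Nsub p) \<in> Ip p"
  by (simp add: Ip_def Nsub_in_subgroups_p)

section \<open>Subgroups of order \<open>p\<close> other than \<open>N\<close>\<close>

lemma subgroups_p_multiple:
  assumes p: "0 < p" and H: "H \<in> subgroups_p p" and x: "x \<in> H" and j: "1 \<le> j"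
  shows "((j * fst x) mod p, (j * snd x) mod p) \<in> H"
  using j
proof (induction j rule: dec_induct)
  case base
  have "x \<in> Gp p"
    using H x by (auto simp: subgroups_p_def)
  then show ?case
    using x by (cases x) (simp add: Gp_mem)
next
  case (step j)
  have "gmul p ((j * fst x) mod p, (j * snd x) mod p) x \<in> H"
    using H step.IH x by (auto simp: subgroups_p_def)
  moreover have "gmul p ((j * fst x) mod p, (j * snd x) mod p) x
      = ((Suc j * fst x) mod p, (Suc j * snd x) mod p)"
    by (simp add: gmul_def mod_add_right_eq add.commute)
  ultimately show ?case
    by simp
qed

lemma subgroups_p_inter_Nsub:
  assumes p: "prime p" and H: "H \<in> subgroups_p p" and HN: "H \<noteq> Nsub p" and x: "(a, 0) \<in> H"
  shows "a = 0"
proof (rule ccontr)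
  assume "a \<noteq> 0"
  have p0: "0 < p"
    using p prime_gt_0_nat by blast
  have HG: "H \<subseteq> Gp p"
    using H by (simp add: subgroups_p_def)
  have "a < p"
    using HG x by (auto simp: Gp_mem)
  with \<open>a \<noteq> 0\<close> have "\<not> p dvd a"
    by (auto dest: dvd_imp_le)
  then have "coprime a p"
    using prime_imp_coprime[OF p] by (simp add: coprime_commute)
  then obtain u where u: "[a * u = Suc 0] (mod p)"
    using cong_solve_coprime_nat by blast
  \<comment> \<open>\<open>(a, 0)\<close> generates \<open>N\<close>, so \<open>H\<close> would contain \<open>N\<close>\<close>
  have "Nsub p \<subseteq> H"
  proof
    fix g assume "g \<in> Nsub p"
    then obtain b where gb: "g = (b, 0)" and bp: "b < p"
      by (cases g) (auto simp: Nsub_mem)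
    have "(((u * b + p) * a) mod p, ((u * b + p) * 0) mod p) \<in> H"
      using subgroups_p_multiple[OF p0 H x, of "u * b + p"] p0 by simp
    moreover have "((u * b + p) * a) mod p = b"
    proof -
      have "((u * b + p) * a) mod p = ((a * u) * b) mod p"
        by (simp add: algebra_simps)
      also have "\<dots> = ((a * u) mod p * b) mod p"
        by (simp add: mod_mult_left_eq)
      also have "\<dots> = b"
        using u bp by (simp add: cong_def)
      finally show ?thesis .
    qed
    ultimately show "g \<in> H"
      using gb by simp
  qed
  moreover have "finite H" "card H = p"
    using HG H finite_Gp finite_subset by (auto simp: subgroups_p_def)
  ultimately have "Nsub p = H"
    using card_Nsub by (metis card_subset_eq)
  then show False
    using HN by simp
qed

lemma subgroups_p_snd_inj:
  assumes p: "prime p" and H: "H \<in> subgroups_p p" and HN: "H \<noteq> Nsub p"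
  shows "inj_on snd H"
proof
  fix x y assume x: "x \<in> H" and y: "y \<in> H" and s: "snd x = snd y"
  have p0: "0 < p" and p1: "1 \<le> p - 1"
    using prime_ge_2_nat[OF p] by simp_all
  have xy: "fst x < p" "fst y < p"
    using H x y by (auto simp: subgroups_p_def Gp_mem)
  \<comment> \<open>\<open>x y\<^sup>-\<^sup>1 = x y\<^sup>p\<^sup>-\<^sup>1\<close> lies in \<open>H \<inter> N\<close>\<close>
  have "gmul p x (((p - 1) * fst y) mod p, ((p - 1) * snd y) mod p) \<in> H"
    using H x subgroups_p_multiple[OF p0 H y p1] by (auto simp: subgroups_p_def)
  moreover have "(snd x + ((p - 1) * snd y) mod p) mod p = 0"
  proof -
    have "(p - 1) * snd x + snd x = p * snd x"
      using p0 by (cases p) auto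
    then show ?thesis
      using s by (simp add: mod_add_right_eq add.commute)
  qed
  ultimately have "(fst x + ((p - 1) * fst y) mod p) mod p = 0"
    using subgroups_p_inter_Nsub[OF p H HN] by (simp add: gmul_def)
  then have "fst x = fst y"
    using mod_add_pred_mult_eq_0_imp_eq[OF p0 xy] by simp
  with s show "x = y"
    by (simp add: prod_eq_iff)
qed

lemma subgroups_p_snd_image:
  assumes p: "prime p" and H: "H \<in> subgroups_p p" and HN: "H \<noteq> Nsub p"
  shows "snd ` H = {..<p}"
proof -
  have "snd ` H \<subseteq> {..<p}"
    using H by (auto simp: subgroups_p_def Gp_mem)
  moreover have "card (snd ` H) = p"
    using subgroups_p_snd_inj[OF assms] H by (simp add: card_image subgroups_p_def)
  ultimately show ?thesis
    by (simp add: card_subset_eq)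
qed

lemma card_coset_Nsub_inter_subgroups_p:
  assumes p: "prime p" and H: "H \<in> subgroups_p p" and HN: "H \<noteq> Nsub p" and h: "h \<in> Gp p"
  shows "card {h' \<in> Nsub p. gdiv p h h' \<in> H} = 1"
proof -
  have p0: "0 < p"
    using p prime_gt_0_nat by blast
  have hp: "fst h < p" "snd h < p"
    using h by (auto simp: Gp_mem)
  obtain x where x: "x \<in> H" "snd x = snd h"
    using subgroups_p_snd_image[OF p H HN] hp(2) by (metis imageE lessThan_iff)
  have xp: "fst x < p"
    using x H by (auto simp: subgroups_p_def Gp_mem)
  define j where "j = (fst h + p - fst x) mod p"
  have "{h' \<in> Nsub p. gdiv p h h' \<in> H} = {(j, 0)}"
  proof (intro equalityI subsetI)
    fix h' assume "h' \<in> {h' \<in> Nsub p. gdiv p h h' \<in> H}"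
    then obtain i where hi: "h' = (i, 0)" "i < p" and inH: "gdiv p h h' \<in> H"
      by (cases h') (auto simp: Nsub_mem)
    have gd: "gdiv p h h' = ((fst h + p - i) mod p, snd h)"
      using hi hp by (simp add: gdiv_def)
    have "gdiv p h h' = x"
      using inj_onD[OF subgroups_p_snd_inj[OF p H HN] _ inH x(1)] gd x(2) by simp
    then have "j = i"
      using gd add_diff_mod_diff_cancel[OF p0 hp(1) hi(2)] by (auto simp: j_def)
    then show "h' \<in> {(j, 0)}"
      using hi by simp
  next
    fix h' :: grp assume "h' \<in> {(j, 0)}"
    then have h': "h' = (j, 0)"
      by simp
    have "gdiv p h h' = x"
      using h' hp add_diff_mod_diff_cancel[OF p0 hp(1) xp] x(2)
      by (cases x) (simp add: gdiv_def j_def)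
    then show "h' \<in> {h' \<in> Nsub p. gdiv p h h' \<in> H}"
      using x h' p0 by (simp add: Nsub_mem j_def)
  qed
  then show ?thesis
    by simp
qed

definition gconv :: "nat \<Rightarrow> (grp \<Rightarrow> int) \<Rightarrow> (grp \<Rightarrow> int) \<Rightarrow> grp \<Rightarrow> int" where
  "gconv p a b g = (\<Sum>h\<in>Gp p. a h * b (gdiv p g h))"

lemma gconv_commute: "0 < p \<Longrightarrow> g \<in> Gp p \<Longrightarrow> gconv p a b g = gconv p b a g"
  unfolding gconv_def
  by (rule sum.reindex_bij_witness[where i="gdiv p g" and j="gdiv p g"])
     (auto simp: gdiv_gdiv gdiv_in_Gp)

lemma gconv_assoc:
  assumes p: "0 < p" and g: "g \<in> Gp p"
  shows "gconv p a (gconv p b c) g = gconv p (gconv p a b) c g"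
proof -
  have "gconv p (gconv p a b) c g
      = (\<Sum>h'\<in>Gp p. \<Sum>h\<in>Gp p. a h * b (gdiv p h' h) * c (gdiv p g h'))"
    unfolding gconv_def by (simp add: sum_distrib_right)
  also have "\<dots> = (\<Sum>h\<in>Gp p. \<Sum>h'\<in>Gp p. a h * b (gdiv p h' h) * c (gdiv p g h'))"
    by (rule sum.swap)
  also have "\<dots> = (\<Sum>h\<in>Gp p. \<Sum>u\<in>Gp p. a h * b u * c (gdiv p (gdiv p g h) u))"
  proof (rule sum.cong[OF refl])
    fix h assume h: "h \<in> Gp p"
    show "(\<Sum>h'\<in>Gp p. a h * b (gdiv p h' h) * c (gdiv p g h'))
        = (\<Sum>u\<in>Gp p. a h * b u * c (gdiv p (gdiv p g h) u))"
      by (rule sum.reindex_bij_witness[where i="gmul p h" and j="\<lambda>h'. gdiv p h' h"])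
         (use p h in \<open>auto simp: gdiv_gmul gmul_gdiv gdiv_in_Gp gmul_in_Gp gdiv_gmul_right,
           metis gdiv_gmul_right gdiv_in_Gp gmul_gdiv\<close>)
  qed
  also have "\<dots> = gconv p a (gconv p b c) g"
    unfolding gconv_def by (simp add: sum_distrib_left mult.assoc)
  finally show ?thesis
    by simp
qed

lemma sum_mod_cong:
  "(\<And>x. x \<in> A \<Longrightarrow> f x mod m = g x mod m) \<Longrightarrow> (\<Sum>x\<in>A. f x) mod m = (\<Sum>x\<in>A. g x :: int) mod m"
  by (metis (mono_tags, lifting) mod_sum_eq sum.cong)

lemma gconv_cong_mod:
  assumes p: "0 < p" and "\<forall>h\<in>Gp p. a h mod m = a' h mod m" and "\<forall>h\<in>Gp p. b h mod m = b' h mod m"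
  shows "gconv p a b g mod m = gconv p a' b' g mod m"
  unfolding gconv_def using assms gdiv_in_Gp[OF p] by (intro sum_mod_cong) (metis mod_mult_eq)

lemma gconv_cong:
  "0 < p \<Longrightarrow> \<forall>h\<in>Gp p. a h = a' h \<Longrightarrow> \<forall>h\<in>Gp p. b h = b' h \<Longrightarrow> gconv p a b g = gconv p a' b' g"
  unfolding gconv_def using gdiv_in_Gp by (auto intro!: sum.cong)

text \<open>Elements of \<open>\<int>\<^sub>pG\<close> are sequences of residues, so identities between products are
  checked one level \<open>k\<close> at a time, where the product is an integer convolution reduced
  modulo \<open>p\<^sup>k\<close>.\<close>
definition level :: "zpg \<Rightarrow> nat \<Rightarrow> grp \<Rightarrow> int" where
  "level r k = (\<lambda>h. r h k)"

lemma level_apply [simp]: "level r k h = r h k"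
  by (simp add: level_def)

lemma zpg_mul_level: "g \<in> Gp p \<Longrightarrow> zpg_mul p r s g k = gconv p (level r k) (level s k) g mod int p ^ k"
  by (simp add: zpg_mul_def zp_sum_def zp_mul_def gconv_def mod_sum_eq)

lemma zpg_mul_outside: "g \<notin> Gp p \<Longrightarrow> zpg_mul p r s g = zp_zero"
  by (simp add: zpg_mul_def)

lemma zpg_add_level: "g \<in> Gp p \<Longrightarrow> zpg_add p r s g k = (r g k + s g k) mod int p ^ k"
  by (simp add: zpg_add_def zp_add_def)

lemma zpg_add_outside: "g \<notin> Gp p \<Longrightarrow> zpg_add p r s g = zp_zero"
  by (simp add: zpg_add_def)

lemma zpg_mul_eqI:
  assumes "\<And>g k. g \<in> Gp p \<Longrightarrow> gconv p (level r k) (level s k) g mod int p ^ k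
                               = gconv p (level r' k) (level s' k) g mod int p ^ k"
  shows "zpg_mul p r s = zpg_mul p r' s'"
proof (intro ext)
  fix g k
  show "zpg_mul p r s g k = zpg_mul p r' s' g k"
    using assms[of g k] by (cases "g \<in> Gp p") (simp_all add: zpg_mul_level zpg_mul_outside)
qed

lemma zpg_mul_eq_zeroI:
  assumes "\<And>g k. g \<in> Gp p \<Longrightarrow> gconv p (level r k) (level s k) g mod int p ^ k = 0"
  shows "zpg_mul p r s = zpg_zero"
proof (intro ext)
  fix g k
  show "zpg_mul p r s g k = zpg_zero g k"
    using assms[of g k]
    by (cases "g \<in> Gp p") (simp_all add: zpg_mul_level zpg_mul_outside zpg_zero_def zp_zero_def)
qed

lemma zpg_mul_zero_right [simp]: "zpg_mul p r zpg_zero = zpg_zero"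
  by (rule zpg_mul_eq_zeroI) (simp add: gconv_def zpg_zero_def zp_zero_def)

lemma gconv_level_zpg_mul_right:
  assumes p: "0 < p" and g: "g \<in> Gp p"
  shows "gconv p (level a k) (level (zpg_mul p b c) k) g mod int p ^ k
       = gconv p (gconv p (level a k) (level b k)) (level c k) g mod int p ^ k"
proof -
  have "gconv p (level a k) (level (zpg_mul p b c) k) g mod int p ^ k
      = gconv p (level a k) (gconv p (level b k) (level c k)) g mod int p ^ k"
    by (rule gconv_cong_mod[OF p]) (auto simp: zpg_mul_level)
  then show ?thesis
    using gconv_assoc[OF p g] by simp
qed

lemma gconv_zpg_const:
  assumes p: "0 < p" and g: "g \<in> Gp p"
  shows "gconv p (level (zpg_const c) k) b g = c k * b g"
proof -
  have "gconv p (level (zpg_const c) k) b g = (\<Sum>h\<in>Gp p. if h = (0, 0) then c k * b (gdiv p g h) else 0)"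
    unfolding gconv_def by (rule sum.cong) (auto simp: zpg_const_def zp_zero_def)
  then show ?thesis
    using p g by (simp add: zero_in_Gp gdiv_zero finite_Gp)
qed

lemma gconv_zpg_zero_left [simp]: "gconv p (level zpg_zero k) b h = 0"
  by (simp add: gconv_def zpg_zero_def zp_zero_def)

lemma zpg_mul_zero_left [simp]: "zpg_mul p zpg_zero r = zpg_zero"
  by (rule zpg_mul_eq_zeroI) simp

lemma zpg_mul_mul_cong_left:
  assumes p: "0 < p"
    and agree: "\<And>h k. h \<in> Gp p \<Longrightarrow> gconv p (level a k) (level W k) h mod int p ^ k
                                   = gconv p (level a' k) (level W k) h mod int p ^ k"
  shows "zpg_mul p a (zpg_mul p W r) = zpg_mul p a' (zpg_mul p W r)"
proof (rule zpg_mul_eqI)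
  fix g k assume g: "g \<in> Gp p"
  have "gconv p (gconv p (level a k) (level W k)) (level r k) g mod int p ^ k
      = gconv p (gconv p (level a' k) (level W k)) (level r k) g mod int p ^ k"
    by (rule gconv_cong_mod[OF p]) (auto simp: agree)
  then show "gconv p (level a k) (level (zpg_mul p W r) k) g mod int p ^ k
      = gconv p (level a' k) (level (zpg_mul p W r) k) g mod int p ^ k"
    by (simp add: gconv_level_zpg_mul_right[OF p g])
qed

lemma gconv_supported_Nsub:
  assumes "\<And>h'. h' \<notin> Nsub p \<Longrightarrow> a h' = zp_zero"
  shows "gconv p (level a k) b h = (\<Sum>h'\<in>Nsub p. a h' k * b (gdiv p h h'))"
  unfolding gconv_def level_apply
  by (rule sum.mono_neutral_right) (use Nsub_subset_Gp assms in \<open>auto simp: finite_Gp zp_zero_def\<close>)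

lemma Zp_mod: "x \<in> Zp p \<Longrightarrow> x k mod (int p ^ k) = x k"
  by (simp add: Zp_def)

lemma Zp_Suc_mod: "x \<in> Zp p \<Longrightarrow> x (Suc k) mod (int p ^ k) = x k"
  by (simp add: Zp_def)

lemma Zp_mod_le:
  assumes x: "x \<in> Zp p" and "k \<le> j"
  shows "x j mod (int p ^ k) = x k"
  using \<open>k \<le> j\<close>
proof (induction j rule: dec_induct)
  case base
  then show ?case
    using Zp_mod[OF x] by simp
next
  case (step j)
  have "int p ^ k dvd int p ^ j"
    using step(1) by (simp add: le_imp_power_dvd)
  then have "x (Suc j) mod int p ^ k = x (Suc j) mod int p ^ j mod int p ^ k"
    by (simp add: mod_mod_cancel)
  then show ?case
    using step Zp_Suc_mod[OF x] by simp
qed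

lemma compatible_mod_in_Zp:
  assumes "0 < p" and "\<And>k. X (Suc k) mod int p ^ k = X k mod int p ^ k"
  shows "(\<lambda>k. X k mod int p ^ k) \<in> Zp p"
proof -
  have "\<And>k. int p ^ k dvd int p ^ Suc k"
    by simp
  then show ?thesis
    using assms by (simp add: Zp_def mod_mod_cancel)
qed

lemma zp_zero_in_Zp: "0 < p \<Longrightarrow> zp_zero \<in> Zp p"
  by (simp add: Zp_def zp_zero_def)

lemma zp_of_int_in_Zp: "0 < p \<Longrightarrow> zp_of_int p z \<in> Zp p"
  unfolding zp_of_int_def by (rule compatible_mod_in_Zp) (simp_all add: mod_mod_cancel)

lemma zp_of_int_p_nonzero: "1 < p \<Longrightarrow> zp_of_int p (int p) \<noteq> zp_zero"
proof
  assume p: "1 < p" and "zp_of_int p (int p) = zp_zero"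
  then have "int p mod int p ^ 2 = 0"
    by (metis zp_of_int_def zp_zero_def)
  moreover have "int p < int p ^ 2"
    using p by (simp add: power2_eq_square)
  ultimately show False
    using p by simp
qed

lemma Zp_no_zero_divisors:
  assumes p: "prime p" and a: "a \<in> Zp p" and b: "b \<in> Zp p" and "a \<noteq> zp_zero"
    and ab: "\<And>j. (a j * b j) mod int p ^ j = 0"
  shows "b = zp_zero"
proof
  fix k
  obtain m where m: "a m \<noteq> 0"
    using \<open>a \<noteq> zp_zero\<close> by (auto simp: zp_zero_def)
  have "a (m + k) mod int p ^ m = a m"
    using Zp_mod_le[OF a] by simp
  then have not_dvd: "\<not> int p ^ m dvd a (m + k)"
    using m by auto
  have "int p ^ (m + k) dvd a (m + k) * b (m + k)"
    using ab[of "m + k"] by (simp add: dvd_eq_mod_eq_0)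
  then obtain r s where rs: "r + s = m + k" "int p ^ r dvd a (m + k)" "int p ^ s dvd b (m + k)"
    using prime_elem_power_dvd_prod prime_imp_prime_elem[of "int p"] p by (metis prime_nat_int_transfer)
  have "r < m"
  proof (rule ccontr)
    assume "\<not> r < m"
    then have "int p ^ m dvd int p ^ r"
      by (simp add: le_imp_power_dvd)
    with rs(2) not_dvd show False
      using dvd_trans by blast
  qed
  with rs(1) have "int p ^ k dvd int p ^ s"
    by (simp add: le_imp_power_dvd)
  with rs(3) have "int p ^ k dvd b (m + k)"
    using dvd_trans by blast
  then have "b (m + k) mod int p ^ k = 0"
    by simp
  then show "b k = zp_zero k"
    using Zp_mod_le[OF b, of k "m + k"] by (simp add: zp_zero_def)
qed

lemma ZpG_mem: "r \<in> ZpG p \<longleftrightarrow> (\<forall>g\<in>Gp p. r g \<in> Zp p) \<and> (\<forall>g. g \<notin> Gp p \<longrightarrow> r g = zp_zero)"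
  by (auto simp: ZpG_def)

lemma zpg_zero_in_ZpG: "0 < p \<Longrightarrow> zpg_zero \<in> ZpG p"
  by (simp add: ZpG_mem zpg_zero_def zp_zero_in_Zp)

lemma zpg_mul_in_ZpG:
  assumes p: "0 < p" and r: "r \<in> ZpG p" and s: "s \<in> ZpG p"
  shows "zpg_mul p r s \<in> ZpG p"
proof -
  have "zpg_mul p r s g \<in> Zp p" if g: "g \<in> Gp p" for g
  proof -
    have "zpg_mul p r s g = (\<lambda>k. gconv p (level r k) (level s k) g mod int p ^ k)"
      using g by (simp add: zpg_mul_level fun_eq_iff)
    also have "\<dots> \<in> Zp p"
      by (rule compatible_mod_in_Zp[OF p], rule gconv_cong_mod[OF p])
         (use r s in \<open>auto simp: ZpG_mem Zp_Suc_mod Zp_mod\<close>)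
    finally show ?thesis .
  qed
  then show ?thesis
    by (simp add: ZpG_mem zpg_mul_outside)
qed

lemma zpg_add_in_ZpG:
  assumes p: "0 < p" and r: "r \<in> ZpG p" and s: "s \<in> ZpG p"
  shows "zpg_add p r s \<in> ZpG p"
proof -
  have "zpg_add p r s g \<in> Zp p" if g: "g \<in> Gp p" for g
  proof -
    have "zpg_add p r s g = (\<lambda>k. (r g k + s g k) mod int p ^ k)"
      using g by (simp add: zpg_add_level fun_eq_iff)
    also have "\<dots> \<in> Zp p"
    proof (rule compatible_mod_in_Zp[OF p])
      fix k
      have "r g (Suc k) mod int p ^ k = r g k mod int p ^ k" "s g (Suc k) mod int p ^ k = s g k mod int p ^ k"
        using r s g by (auto simp: ZpG_mem Zp_Suc_mod Zp_mod)
      then show "(r g (Suc k) + s g (Suc k)) mod int p ^ k = (r g k + s g k) mod int p ^ k"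
        by (metis mod_add_eq)
    qed
    finally show ?thesis .
  qed
  then show ?thesis
    by (simp add: ZpG_mem zpg_add_outside)
qed

lemma zpg_const_cancel:
  assumes p: "prime p" and a: "a \<in> Zp p" and "a \<noteq> zp_zero" and y: "y \<in> ZpG p"
    and ay: "zpg_mul p (zpg_const a) y = zpg_zero"
  shows "y = zpg_zero"
proof
  fix g
  have p0: "0 < p"
    using p prime_gt_0_nat by blast
  show "y g = zpg_zero g"
  proof (cases "g \<in> Gp p")
    case False
    then show ?thesis
      using y unfolding ZpG_mem zpg_zero_def by blast
  next
    case g: True
    have "y g = zp_zero"
    proof (rule Zp_no_zero_divisors[OF p a _ \<open>a \<noteq> zp_zero\<close>])
      show "y g \<in> Zp p"
        using y g by (simp add: ZpG_mem)
      fix j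
      have "zpg_mul p (zpg_const a) y g j = 0"
        using ay by (simp add: zpg_zero_def zp_zero_def)
      then show "(a j * y g j) mod int p ^ j = 0"
        using g gconv_zpg_const[OF p0 g] by (simp add: zpg_mul_level level_def)
    qed
    then show ?thesis
      by (simp add: zpg_zero_def)
  qed
qed

lemma w_in_ZpG: "0 < p \<Longrightarrow> w p i \<in> ZpG p"
  by (auto simp: ZpG_mem w_def zp_one_def zp_of_int_in_Zp split: option.splits)

lemma Lam_subset_ZpG: "0 < p \<Longrightarrow> Lam p i \<subseteq> ZpG p"
  by (auto simp: Lam_def intro: zpg_mul_in_ZpG w_in_ZpG)

lemma zpg_zero_in_Lam:
  assumes "0 < p"
  shows "zpg_zero \<in> Lam p i"
proof -
  have "zpg_zero = zpg_mul p (w p i) zpg_zero"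
    by simp
  then show ?thesis
    unfolding Lam_def using zpg_zero_in_ZpG[OF assms] by blast
qed

lemma zpg_mul_in_Lam:
  assumes p: "0 < p" and a: "a \<in> ZpG p" and y: "y \<in> Lam p i"
  shows "zpg_mul p a y \<in> Lam p i"
proof -
  obtain r where r: "r \<in> ZpG p" and yr: "y = zpg_mul p (w p i) r"
    using y by (auto simp: Lam_def)
  have "zpg_mul p a (zpg_mul p (w p i) r) = zpg_mul p (w p i) (zpg_mul p a r)"
  proof (rule zpg_mul_eqI)
    fix g k assume g: "g \<in> Gp p"
    have "gconv p (level a k) (level (zpg_mul p (w p i) r) k) g mod int p ^ k
        = gconv p (gconv p (level a k) (level (w p i) k)) (level r k) g mod int p ^ k"
      by (rule gconv_level_zpg_mul_right[OF p g])
    also have "gconv p (gconv p (level a k) (level (w p i) k)) (level r k) g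
        = gconv p (gconv p (level (w p i) k) (level a k)) (level r k) g"
      using gconv_commute[OF p] p by (intro gconv_cong) auto
    also have "\<dots> mod int p ^ k = gconv p (level (w p i) k) (level (zpg_mul p a r) k) g mod int p ^ k"
      by (rule gconv_level_zpg_mul_right[OF p g, symmetric])
    finally show "gconv p (level a k) (level (zpg_mul p (w p i) r) k) g mod int p ^ k
        = gconv p (level (w p i) k) (level (zpg_mul p a r) k) g mod int p ^ k" .
  qed
  then show ?thesis
    using yr zpg_mul_in_ZpG[OF p a r] by (auto simp: Lam_def)
qed

lemma zpg_add_in_Lam:
  assumes p: "0 < p" and y: "y \<in> Lam p i" and z: "z \<in> Lam p i"
  shows "zpg_add p y z \<in> Lam p i"
proof -
  obtain r s where r: "r \<in> ZpG p" and yr: "y = zpg_mul p (w p i) r"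
    and s: "s \<in> ZpG p" and zs: "z = zpg_mul p (w p i) s"
    using y z by (auto simp: Lam_def)
  have "zpg_add p y z g k = zpg_mul p (w p i) (zpg_add p r s) g k" if g: "g \<in> Gp p" for g k
  proof -
    have "zpg_add p y z g k
        = (gconv p (level (w p i) k) (level r k) g + gconv p (level (w p i) k) (level s k) g) mod int p ^ k"
      using g by (simp add: zpg_add_level yr zs zpg_mul_level mod_add_eq)
    also have "\<dots> = gconv p (level (w p i) k) (\<lambda>h. r h k + s h k) g mod int p ^ k"
      by (simp add: gconv_def sum.distrib distrib_left)
    also have "\<dots> = gconv p (level (w p i) k) (level (zpg_add p r s) k) g mod int p ^ k"
      by (rule gconv_cong_mod[OF p]) (auto simp: zpg_add_level)
    finally show ?thesis
      using g by (simp add: zpg_mul_level)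
  qed
  then have "zpg_add p y z = zpg_mul p (w p i) (zpg_add p r s)"
    by (intro ext) (metis zpg_add_outside zpg_mul_outside)
  then show ?thesis
    using zpg_add_in_ZpG[OF p r s] by (auto simp: Lam_def)
qed

section \<open>The action of \<open>I\<^sub>N\<close>\<close>

lemma gconv_IN_N_invariant:
  assumes a: "a \<in> IN p" and inv: "\<And>h'. h' \<in> Nsub p \<Longrightarrow> W (gdiv p h h') = W h"
  shows "gconv p (level a k) (level W k) h mod int p ^ k = 0"
proof -
  have "zp_sum p a (Nsub p) k = zp_zero k"
    using a by (simp add: IN_def)
  then have aug: "(\<Sum>h'\<in>Nsub p. a h' k) mod int p ^ k = 0"
    by (simp add: zp_sum_def zp_zero_def)
  have "\<And>h'. h' \<notin> Nsub p \<Longrightarrow> a h' = zp_zero"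
    using a unfolding IN_def by blast
  then have "gconv p (level a k) (level W k) h = (\<Sum>h'\<in>Nsub p. a h' k * W (gdiv p h h') k)"
    by (simp add: gconv_supported_Nsub)
  also have "\<dots> = (\<Sum>h'\<in>Nsub p. a h' k * W h k)"
    using inv by (auto intro!: sum.cong)
  also have "\<dots> = W h k * (\<Sum>h'\<in>Nsub p. a h' k)"
    by (simp add: sum_distrib_left mult.commute)
  finally have "gconv p (level a k) (level W k) h mod int p ^ k
      = W h k * ((\<Sum>h'\<in>Nsub p. a h' k) mod int p ^ k) mod int p ^ k"
    by (simp add: mod_mult_right_eq)
  then show ?thesis
    using aug by simp
qed

lemma IN_annihilates_Lam:
  assumes p: "0 < p" and a: "a \<in> IN p" and i: "i = None \<or> i = Some (Nsub p)" and y: "y \<in> Lam p i"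
  shows "zpg_mul p a y = zpg_zero"
proof -
  obtain r where y: "y = zpg_mul p (w p i) r"
    using y by (auto simp: Lam_def)
  have "zpg_mul p a (zpg_mul p (w p i) r) = zpg_mul p zpg_zero (zpg_mul p (w p i) r)"
  proof (rule zpg_mul_mul_cong_left[OF p])
    fix h k assume h: "h \<in> Gp p"
    have "w p i (gdiv p h h') = w p i h" if "h' \<in> Nsub p" for h'
      using i h that gdiv_in_Nsub_iff[OF h that] by (auto simp: w_def gdiv_in_Gp[OF p])
    then show "gconv p (level a k) (level (w p i) k) h mod int p ^ k
        = gconv p (level zpg_zero k) (level (w p i) k) h mod int p ^ k"
      using gconv_IN_N_invariant[OF a] by simp
  qed
  then show ?thesis
    using y by simp
qed

definition p_minus_Nhat :: "nat \<Rightarrow> zpg" where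
  "p_minus_Nhat p = (\<lambda>g. if g \<in> Gp p then (if g = (0, 0) then zp_of_int p (int p - 1)
       else if g \<in> Nsub p then zp_of_int p (-1) else zp_zero) else zp_zero)"

lemma p_minus_Nhat_mod:
  "g \<in> Nsub p \<Longrightarrow> p_minus_Nhat p g k mod int p ^ k = ((if g = (0, 0) then int p else 0) - 1) mod int p ^ k"
  using Nsub_subset_Gp by (auto simp: p_minus_Nhat_def zp_of_int_def)

lemma p_minus_Nhat_outside: "0 < p \<Longrightarrow> g \<notin> Nsub p \<Longrightarrow> p_minus_Nhat p g = zp_zero"
  using zero_in_Nsub[of p] by (auto simp: p_minus_Nhat_def)

lemma p_minus_Nhat_in_IN:
  assumes p: "0 < p"
  shows "p_minus_Nhat p \<in> IN p"
proof -
  have "p_minus_Nhat p \<in> ZpG p"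
    using p by (auto simp: ZpG_mem p_minus_Nhat_def zp_of_int_in_Zp zp_zero_in_Zp)
  moreover have "zp_sum p (p_minus_Nhat p) (Nsub p) k = zp_zero k" for k
  proof -
    have "(\<Sum>g\<in>Nsub p. p_minus_Nhat p g k) mod int p ^ k
        = (\<Sum>g\<in>Nsub p. (if g = (0, 0) then int p else 0) - 1) mod int p ^ k"
      by (rule sum_mod_cong) (simp add: p_minus_Nhat_mod)
    also have "(\<Sum>g\<in>Nsub p. (if g = (0, 0) then int p else 0) - 1) = 0"
      using p by (simp add: sum_subtractf finite_Nsub zero_in_Nsub card_Nsub)
    finally show ?thesis
      by (simp add: zp_sum_def zp_zero_def)
  qed
  ultimately show ?thesis
    by (auto simp: IN_def p_minus_Nhat_outside[OF p])
qed

lemma Nhat_annihilates_w: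
  assumes p: "prime p" and H: "H \<in> subgroups_p p" and HN: "H \<noteq> Nsub p" and h: "h \<in> Gp p"
  shows "(\<Sum>h'\<in>Nsub p. w p (Some H) (gdiv p h h') k) mod int p ^ k = 0"
proof -
  have p0: "0 < p"
    using p prime_gt_0_nat by blast
  have "(\<Sum>h'\<in>Nsub p. w p (Some H) (gdiv p h h') k) mod int p ^ k
      = (\<Sum>h'\<in>Nsub p. (if gdiv p h h' \<in> H then int p else 0) - 1) mod int p ^ k"
    by (rule sum_mod_cong) (auto simp: w_def gdiv_in_Gp[OF p0] zp_of_int_def)
  also have "(\<Sum>h'\<in>Nsub p. (if gdiv p h h' \<in> H then int p else 0) - 1)
      = int p * int (card {h' \<in> Nsub p. gdiv p h h' \<in> H}) - int p"
    by (simp add: sum_subtractf finite_Nsub card_Nsub sum.inter_filter[symmetric])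
  finally show ?thesis
    using card_coset_Nsub_inter_subgroups_p[OF assms] by simp
qed

lemma gconv_p_minus_Nhat_w:
  assumes p: "prime p" and H: "H \<in> subgroups_p p" and HN: "H \<noteq> Nsub p" and h: "h \<in> Gp p"
  shows "gconv p (level (p_minus_Nhat p) k) (level (w p (Some H)) k) h mod int p ^ k
       = int p * w p (Some H) h k mod int p ^ k"
proof -
  have p0: "0 < p"
    using p prime_gt_0_nat by blast
  let ?W = "w p (Some H)"
  have "gconv p (level (p_minus_Nhat p) k) (level ?W k) h
      = (\<Sum>h'\<in>Nsub p. p_minus_Nhat p h' k * ?W (gdiv p h h') k)"
    by (simp add: gconv_supported_Nsub p_minus_Nhat_outside[OF p0])
  also have "\<dots> mod int p ^ k
      = (\<Sum>h'\<in>Nsub p. ((if h' = (0, 0) then int p else 0) - 1) * ?W (gdiv p h h') k) mod int p ^ k"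
    by (rule sum_mod_cong) (metis p_minus_Nhat_mod mod_mult_left_eq)
  also have "(\<Sum>h'\<in>Nsub p. ((if h' = (0, 0) then int p else 0) - 1) * ?W (gdiv p h h') k)
      = int p * ?W h k - (\<Sum>h'\<in>Nsub p. ?W (gdiv p h h') k)"
    using p0 h by (simp add: left_diff_distrib sum_subtractf if_distrib[of "\<lambda>x. x * _"]
        finite_Nsub zero_in_Nsub gdiv_zero cong: if_cong)
  also have "\<dots> mod int p ^ k = int p * ?W h k mod int p ^ k"
    using Nhat_annihilates_w[OF p H HN h] by (simp add: mod_diff_right_eq[symmetric])
  finally show ?thesis .
qed

lemma p_minus_Nhat_acts_as_p:
  assumes p: "prime p" and H: "H \<in> subgroups_p p" and HN: "H \<noteq> Nsub p" and y: "y \<in> Lam p (Some H)"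
  shows "zpg_mul p (p_minus_Nhat p) y = zpg_mul p (zpg_const (zp_of_int p (int p))) y"
proof -
  have p0: "0 < p"
    using p prime_gt_0_nat by blast
  obtain r where y: "y = zpg_mul p (w p (Some H)) r"
    using y by (auto simp: Lam_def)
  have "zpg_mul p (p_minus_Nhat p) (zpg_mul p (w p (Some H)) r)
      = zpg_mul p (zpg_const (zp_of_int p (int p))) (zpg_mul p (w p (Some H)) r)"
  proof (rule zpg_mul_mul_cong_left[OF p0])
    fix h k assume h: "h \<in> Gp p"
    show "gconv p (level (p_minus_Nhat p) k) (level (w p (Some H)) k) h mod int p ^ k
        = gconv p (level (zpg_const (zp_of_int p (int p))) k) (level (w p (Some H)) k) h mod int p ^ k"
      using gconv_p_minus_Nhat_w[OF p H HN h] gconv_zpg_const[OF p0 h]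
      by (simp add: zp_of_int_def mod_mult_left_eq)
  qed
  then show ?thesis
    using y by simp
qed

lemma funpow_closed: "\<forall>x\<in>V. F x \<in> V \<Longrightarrow> x \<in> V \<Longrightarrow> (F ^^ n) x \<in> V"
  by (induction n) auto

lemma funpow_additive:
  assumes "\<forall>x\<in>V. F x \<in> V" and "\<forall>x\<in>V. \<forall>y\<in>V. F (x + y) = F x + F y" and "x \<in> V" "y \<in> V"
  shows "(F ^^ n) (x + y) = (F ^^ n) x + (F ^^ n) y"
  by (induction n) (use assms funpow_closed[OF assms(1)] in auto)

context
  fixes p :: nat and V :: "'v::ab_group_add set" and vn vc :: "'v \<Rightarrow> 'v"
  assumes module: "FpG_module p V vn vc"
begin

lemma gact_add:
  assumes "x \<in> V" "y \<in> V"
  shows "gact vn vc g (x + y) = gact vn vc g x + gact vn vc g y"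
proof -
  have n: "\<forall>x\<in>V. vn x \<in> V" "\<forall>x\<in>V. \<forall>y\<in>V. vn (x + y) = vn x + vn y"
    and c: "\<forall>x\<in>V. vc x \<in> V" "\<forall>x\<in>V. \<forall>y\<in>V. vc (x + y) = vc x + vc y"
    using module by (auto simp: FpG_module_def)
  show ?thesis
    unfolding gact_def using assms
    by (simp add: funpow_additive[OF c] funpow_additive[OF n] funpow_closed[OF c(1)])
qed

lemma gact_zero: "gact vn vc g 0 = 0"
  using gact_add[of 0 0] module by (simp add: FpG_module_def)

lemma vact_add: "x \<in> V \<Longrightarrow> y \<in> V \<Longrightarrow> vact p vn vc r (x + y) = vact p vn vc r x + vact p vn vc r y"
  by (simp add: vact_def gact_add nsm_def sum.distrib)

lemma vact_zero: "vact p vn vc r 0 = 0"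
  by (simp add: vact_def gact_zero nsm_def)

lemma vact_sum:
  "finite A \<Longrightarrow> (\<And>i. i \<in> A \<Longrightarrow> v i \<in> V)
    \<Longrightarrow> vact p vn vc r (\<Sum>i\<in>A. v i) = (\<Sum>i\<in>A. vact p vn vc r (v i)) \<and> (\<Sum>i\<in>A. v i) \<in> V"
proof (induction A rule: finite_induct)
  case empty
  then show ?case
    using module by (simp add: vact_zero FpG_module_def)
next
  case (insert a A)
  then show ?case
    using module by (simp add: vact_add FpG_module_def)
qed

end

lemma Fset_mem:
  "x \<in> Fset p d \<longleftrightarrow> (\<forall>i\<in>Ip p. x i \<in> Fcomp p (d i) i) \<and> (\<forall>i. i \<notin> Ip p \<longrightarrow> x i = fc_zero)"
  by (auto simp: Fset_def)

lemma zpg_add_zero [simp]: "zpg_add p zpg_zero zpg_zero = zpg_zero"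
  by (auto simp: zpg_add_def zpg_zero_def zp_add_def zp_zero_def)

lemma fc_add_zero [simp]: "fc_add p fc_zero fc_zero = fc_zero"
  by (simp add: fc_add_def fc_zero_def)

lemma fc_smul_zero [simp]: "fc_smul p a fc_zero = fc_zero"
  by (simp add: fc_smul_def fc_zero_def)

lemma fc_zero_in_Fcomp: "0 < p \<Longrightarrow> fc_zero \<in> Fcomp p n i"
  by (simp add: Fcomp_def fc_zero_def zpg_zero_in_Lam)

lemma fc_add_in_Fcomp:
  "0 < p \<Longrightarrow> x \<in> Fcomp p n i \<Longrightarrow> y \<in> Fcomp p n i \<Longrightarrow> fc_add p x y \<in> Fcomp p n i"
  by (simp add: Fcomp_def fc_add_def zpg_add_in_Lam)

lemma fc_smul_in_Fcomp:
  "0 < p \<Longrightarrow> a \<in> ZpG p \<Longrightarrow> x \<in> Fcomp p n i \<Longrightarrow> fc_smul p a x \<in> Fcomp p n i"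
  by (simp add: Fcomp_def fc_smul_def zpg_mul_in_Lam)

lemma Fcomp_in_ZpG: "0 < p \<Longrightarrow> x \<in> Fcomp p n i \<Longrightarrow> x k \<in> ZpG p"
  using Lam_subset_ZpG by (cases "k < n") (auto simp: Fcomp_def zpg_zero_in_ZpG)

definition F_submodule :: "nat \<Rightarrow> (ix \<Rightarrow> nat) \<Rightarrow> felt set \<Rightarrow> bool" where
  "F_submodule p d U \<longleftrightarrow> U \<subseteq> Fset p d \<and> f_zero \<in> U \<and> (\<forall>x\<in>U. \<forall>y\<in>U. f_add p x y \<in> U)
     \<and> (\<forall>r\<in>ZpG p. \<forall>x\<in>U. f_smul p r x \<in> U)"

lemma Uker_F_submodule:
  assumes p: "0 < p" and module: "FpG_module p V vn vc"
    and into: "\<And>i x. i \<in> Ip p \<Longrightarrow> x \<in> Fcomp p (d i) i \<Longrightarrow> f i x \<in> V"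
    and add: "\<And>i x y. i \<in> Ip p \<Longrightarrow> x \<in> Fcomp p (d i) i \<Longrightarrow> y \<in> Fcomp p (d i) i
                \<Longrightarrow> f i (fc_add p x y) = f i x + f i y"
    and smul: "\<And>i r x. i \<in> Ip p \<Longrightarrow> r \<in> ZpG p \<Longrightarrow> x \<in> Fcomp p (d i) i
                \<Longrightarrow> f i (fc_smul p r x) = vact p vn vc r (f i x)"
  shows "F_submodule p d (Uker p d f)"
proof -
  have zero: "f i fc_zero = 0" if "i \<in> Ip p" for i
    using add[OF that fc_zero_in_Fcomp[OF p] fc_zero_in_Fcomp[OF p]] by simp
  have "ftot p f (f_add p x y) = ftot p f x + ftot p f y" if "x \<in> Fset p d" "y \<in> Fset p d" for x y
    using that by (simp add: ftot_def f_add_def Fset_mem add sum.distrib)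
  moreover have "ftot p f (f_smul p r x) = vact p vn vc r (ftot p f x)"
    if "r \<in> ZpG p" "x \<in> Fset p d" for r x
    using that vact_sum[OF module finite_Ip, where v="\<lambda>i. f i (x i)" and r=r]
    by (simp add: ftot_def f_smul_def Fset_mem smul into)
  ultimately show ?thesis
    unfolding F_submodule_def Uker_def
    using vact_zero[OF module]
    by (auto simp: Fset_mem f_zero_def f_add_def f_smul_def ftot_def zero fc_zero_in_Fcomp[OF p]
        fc_add_in_Fcomp[OF p] fc_smul_in_Fcomp[OF p])
qed

lemma f_smul_IN_vanishes:
  assumes p: "0 < p" and a: "a \<in> IN p" and x: "x \<in> Fset p d" and i: "i = None \<or> i = Some (Nsub p)"
  shows "f_smul p a x i = fc_zero"
proof
  fix k
  have "x i \<in> Fcomp p (d i) i"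
    using x i None_in_Ip Nsub_in_Ip[OF p] by (auto simp: Fset_mem)
  then have "x i k \<in> Lam p i"
    using zpg_zero_in_Lam[OF p] by (cases "k < d i") (auto simp: Fcomp_def)
  then show "f_smul p a x i k = fc_zero k"
    using IN_annihilates_Lam[OF p a i] by (simp add: f_smul_def fc_smul_def fc_zero_def)
qed

lemma f_smul_const_vanishes:
  assumes p: "prime p" and a: "a \<in> Zp p" "a \<noteq> zp_zero" and x: "x \<in> Fset p d" and i: "i \<in> Ip p"
    and ax: "f_smul p (zpg_const a) x i = fc_zero"
  shows "x i = fc_zero"
proof
  fix k
  have "zpg_mul p (zpg_const a) (x i k) = zpg_zero"
    using fun_cong[OF ax, of k] by (simp add: f_smul_def fc_smul_def fc_zero_def)
  moreover have "x i \<in> Fcomp p (d i) i"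
    using x i by (simp add: Fset_mem)
  then have "x i k \<in> ZpG p"
    by (rule Fcomp_in_ZpG[OF prime_gt_0_nat[OF p]])
  ultimately show "x i k = fc_zero k"
    using zpg_const_cancel[OF p a] by (simp add: fc_zero_def)
qed

lemma p_minus_Nhat_smul_eq:
  assumes p: "prime p" and x: "x \<in> Fset p d" and x0: "x None = fc_zero" and xN: "x (Some (Nsub p)) = fc_zero"
  shows "f_smul p (p_minus_Nhat p) x = f_smul p (zpg_const (zp_of_int p (int p))) x"
proof (rule ext, rule ext)
  fix i k
  show "f_smul p (p_minus_Nhat p) x i k = f_smul p (zpg_const (zp_of_int p (int p))) x i k"
  proof (cases "i \<in> Ip p \<and> i \<noteq> None \<and> i \<noteq> Some (Nsub p) \<and> k < d i")
    case True
    then obtain H where i: "i = Some H" and H: "H \<in> subgroups_p p" "H \<noteq> Nsub p"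
      by (auto simp: Ip_def)
    have "x i k \<in> Lam p i"
      using x True by (simp add: Fset_mem Fcomp_def)
    then show ?thesis
      using p_minus_Nhat_acts_as_p[OF p H] i by (simp add: f_smul_def fc_smul_def)
  next
    case False
    then have "x i k = zpg_zero"
      using x x0 xN by (cases "i \<in> Ip p") (auto simp: Fset_mem Fcomp_def fc_zero_def)
    then show ?thesis
      by (simp add: f_smul_def fc_smul_def)
  qed
qed

lemma aug_prod_IN_subset:
  assumes p: "0 < p" and U: "F_submodule p d U"
  shows "aug_prod p (IN p) U \<subseteq> {x \<in> U. x None = fc_zero \<and> x (Some (Nsub p)) = fc_zero}"
proof
  fix x assume "x \<in> aug_prod p (IN p) U"
  then show "x \<in> {x \<in> U. x None = fc_zero \<and> x (Some (Nsub p)) = fc_zero}"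
  proof (induction rule: aug_prod.induct)
    case zero
    then show ?case
      using U by (simp add: F_submodule_def f_zero_def)
  next
    case (prod a u)
    then show ?case
      using U f_smul_IN_vanishes[OF p] by (auto simp: F_submodule_def IN_def)
  next
    case (add x y)
    then show ?case
      using U by (simp add: F_submodule_def f_add_def)
  qed
qed

lemma UN_torsion_free_if_aug_prod_eq:
  assumes p: "prime p" and U: "F_submodule p d U"
    and eq: "aug_prod p (IN p) U = {x \<in> U. x None = fc_zero \<and> x (Some (Nsub p)) = fc_zero}"
  shows "UN_torsion_free p U"
  unfolding UN_torsion_free_def
proof (intro ballI impI)
  fix a x assume a: "a \<in> Zp p" "a \<noteq> zp_zero" and x: "x \<in> U"
    and "f_smul p (zpg_const a) x \<in> aug_prod p (IN p) U"
  then have ax: "f_smul p (zpg_const a) x None = fc_zero" "f_smul p (zpg_const a) x (Some (Nsub p)) = fc_zero"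
    using eq by auto
  have "x \<in> Fset p d"
    using U x by (auto simp: F_submodule_def)
  then have "x None = fc_zero" "x (Some (Nsub p)) = fc_zero"
    using f_smul_const_vanishes[OF p a] None_in_Ip Nsub_in_Ip[OF prime_gt_0_nat[OF p]] ax
    by simp_all
  then show "x \<in> aug_prod p (IN p) U"
    using eq x by auto
qed

lemma aug_prod_eq_if_UN_torsion_free:
  assumes p: "prime p" and U: "F_submodule p d U" and tf: "UN_torsion_free p U"
  shows "{x \<in> U. x None = fc_zero \<and> x (Some (Nsub p)) = fc_zero} \<subseteq> aug_prod p (IN p) U"
proof clarify
  fix x assume x: "x \<in> U" "x None = fc_zero" "x (Some (Nsub p)) = fc_zero"
  have p0: "0 < p" and p1: "1 < p"
    using prime_gt_0_nat[OF p] prime_gt_1_nat[OF p] by simp_all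
  have "f_smul p (p_minus_Nhat p) x \<in> aug_prod p (IN p) U"
    by (rule aug_prod.prod[OF p_minus_Nhat_in_IN[OF p0] x(1)])
  then have "f_smul p (zpg_const (zp_of_int p (int p))) x \<in> aug_prod p (IN p) U"
    using p_minus_Nhat_smul_eq[OF p _ x(2,3)] U x(1) by (auto simp: F_submodule_def)
  then show "x \<in> aug_prod p (IN p) U"
    using tf x(1) zp_of_int_in_Zp[OF p0] zp_of_int_p_nonzero[OF p1]
    unfolding UN_torsion_free_def by blast
qed

theorem mainTheorem6:
  fixes p :: nat and d :: "ix \<Rightarrow> nat"
    and V :: "'v::ab_group_add set" and vn vc :: "'v \<Rightarrow> 'v"
    and Vi :: "ix \<Rightarrow> 'v set" and f :: "ix \<Rightarrow> fcomp \<Rightarrow> 'v"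
  assumes "prime p"
    and "diagram p V vn vc Vi"
    and "\<forall>i\<in>Ip p. good_cover p (d i) i vn vc (Vi i) (f i)"
  shows "aug_prod p (IN p) (Uker p d f)
           \<subseteq> {x \<in> Uker p d f. x None = fc_zero \<and> x (Some (Nsub p)) = fc_zero}
       \<and> (aug_prod p (IN p) (Uker p d f)
            = {x \<in> Uker p d f. x None = fc_zero \<and> x (Some (Nsub p)) = fc_zero}
          \<longleftrightarrow> UN_torsion_free p (Uker p d f))"
proof -
  have p0: "0 < p"
    using \<open>prime p\<close> prime_gt_0_nat by blast
  have module: "FpG_module p V vn vc"
    using assms(2) by (simp add: diagram_def)
  have "F_submodule p d (Uker p d f)"
  proof (rule Uker_F_submodule[OF p0 module])
    fix i x assume i: "i \<in> Ip p" and x: "x \<in> Fcomp p (d i) i"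
    have "f i ` Fcomp p (d i) i = Vi i"
      using assms(3) i by (simp add: good_cover_def)
    moreover have "Vi i \<subseteq> V"
      using assms(2) i by (simp add: diagram_def)
    ultimately show "f i x \<in> V"
      using x by blast
  qed (use assms(3) in \<open>auto simp: good_cover_def\<close>)
  then show ?thesis
    using aug_prod_IN_subset[OF p0] UN_torsion_free_if_aug_prod_eq[OF \<open>prime p\<close>]
      aug_prod_eq_if_UN_torsion_free[OF \<open>prime p\<close>]
    by blast
qed

end
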